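(* Let $T$ be a tree and let $v\in V(T)$. Then there exists a constant $C=C(T)$ with the following property. Let $H$ be a bipartite graph with parts $X$ and $Y$ such that $d(y)\ge C|X|^{1/2}$ for every $y\in Y$, and such that the number of triples $(y,x_1,x_2)\in Y\times X\times X$ of distinct vertices with $yx_1,yx_2\in E(H)$ is more than $C|X|^2$. Then $H$ contains a copy of $T[2]$ in which the two vertices corresponding to $v$ are embedded in $X$.
   Context: For a graph $F$, the $2$-blowup $F[2]$ is obtained by replacing each vertex $u$ of $F$ by an independent set of two vertices (the two images of $u$) and each edge by a copy of $K_{2,2}$ between the corresponding sets. $d(y)$ denotes the degree of $y$ in $H$. *)

theory Defs
  imports Complex_Main
begin

definition simple_graph :: "'a set \<Rightarrow> 'a set set \<Rightarrow> bool" where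
  "simple_graph V E \<longleftrightarrow> finite V \<and>
     (\<forall>e\<in>E. \<exists>u w. u \<noteq> w \<and> u \<in> V \<and> w \<in> V \<and> e = {u, w})"

definition adj :: "'a set set \<Rightarrow> 'a \<Rightarrow> 'a \<Rightarrow> bool" where
  "adj E u w \<longleftrightarrow> {u, w} \<in> E"

definition connected_graph :: "'a set \<Rightarrow> 'a set set \<Rightarrow> bool" where
  "connected_graph V E \<longleftrightarrow>
     (\<forall>u\<in>V. \<forall>w\<in>V. (u, w) \<in> {(a, b). adj E a b}\<^sup>*)"

definition is_cycle :: "'a set \<Rightarrow> 'a set set \<Rightarrow> 'a list \<Rightarrow> bool" where
  "is_cycle V E cs \<longleftrightarrow> length cs \<ge> 3 \<and> distinct cs \<and> set cs \<subseteq> V \<and>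
     (\<forall>i. Suc i < length cs \<longrightarrow> adj E (cs ! i) (cs ! Suc i)) \<and>
     adj E (last cs) (hd cs)"

definition acyclic_graph :: "'a set \<Rightarrow> 'a set set \<Rightarrow> bool" where
  "acyclic_graph V E \<longleftrightarrow> \<not> (\<exists>cs. is_cycle V E cs)"

definition is_tree :: "'a set \<Rightarrow> 'a set set \<Rightarrow> bool" where
  "is_tree V E \<longleftrightarrow> simple_graph V E \<and> V \<noteq> {} \<and> connected_graph V E \<and> acyclic_graph V E"

text \<open>The 2-blowup F[2]: vertex u is replaced by (u,False),(u,True).\<close>
definition blowup2_V :: "'a set \<Rightarrow> ('a \<times> bool) set" where
  "blowup2_V V = V \<times> UNIV"

definition blowup2_E :: "'a set set \<Rightarrow> ('a \<times> bool) set set" where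
  "blowup2_E E = {{(u, i), (w, j)} | u w i j. {u, w} \<in> E}"

definition subgraph_copy ::
  "'a set \<Rightarrow> 'a set set \<Rightarrow> 'b set \<Rightarrow> 'b set set \<Rightarrow> ('a \<Rightarrow> 'b) \<Rightarrow> bool" where
  "subgraph_copy VF EF VH EH f \<longleftrightarrow> inj_on f VF \<and> f ` VF \<subseteq> VH \<and>
     (\<forall>u\<in>VF. \<forall>w\<in>VF. {u, w} \<in> EF \<longrightarrow> {f u, f w} \<in> EH)"

definition bipartite_graph :: "'b set \<Rightarrow> 'b set \<Rightarrow> 'b set set \<Rightarrow> bool" where
  "bipartite_graph X Y E \<longleftrightarrow> finite X \<and> finite Y \<and> X \<inter> Y = {} \<and>
     E \<subseteq> {{x, y} | x y. x \<in> X \<and> y \<in> Y}"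

definition degree :: "'b set set \<Rightarrow> 'b \<Rightarrow> nat" where
  "degree E y = card {x. {x, y} \<in> E}"

definition cherries :: "'b set \<Rightarrow> 'b set \<Rightarrow> 'b set set \<Rightarrow> ('b \<times> 'b \<times> 'b) set" where
  "cherries X Y E = {(y, x1, x2). y \<in> Y \<and> x1 \<in> X \<and> x2 \<in> X \<and>
       y \<noteq> x1 \<and> y \<noteq> x2 \<and> x1 \<noteq> x2 \<and> {y, x1} \<in> E \<and> {y, x2} \<in> E}"

end

theory Submission
  imports Defs "HOL-Analysis.Convex"
begin

text \<open>Consider the bipartite graph whose vertices are the ordered pairs of distinct vertices of X
  and of Y, two pairs being adjacent when together they span a K_{2,2} in H. By Cauchy-Schwarz,
  the degree and cherry conditions make this graph have more than (2s + 1) times as many edges as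
  the total codegree of its vertices, where s = 2|V(T)|. Deleting pairs of too small degree leaves
  a nonempty subgraph in which every pair has a K_{2,2}-partner avoiding any prescribed s vertices
  of H. A copy of T[2] is then built greedily, leaf by leaf, starting from a pair in X for v.\<close>

section \<open>Leaves of forests\<close>

lemma adj_commute: "adj E u w = adj E w u"
  by (simp add: adj_def insert_commute)

lemma simple_graph_not_adj_self: "simple_graph V E \<Longrightarrow> \<not> adj E u u"
  unfolding simple_graph_def adj_def by (metis doubleton_eq_iff insert_absorb2)

lemma simple_graph_adj_in: "simple_graph V E \<Longrightarrow> adj E u w \<Longrightarrow> u \<in> V \<and> w \<in> V"
  unfolding simple_graph_def adj_def by (metis doubleton_eq_iff)

lemma simple_graph_delete_vertex: "simple_graph V E \<Longrightarrow> simple_graph (V - {u}) {e\<in>E. u \<notin> e}"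
  unfolding simple_graph_def by fastforce

lemma adj_delete_vertex: "adj {e\<in>E. u \<notin> e} a b \<longleftrightarrow> adj E a b \<and> a \<noteq> u \<and> b \<noteq> u"
  unfolding adj_def by auto

lemma acyclic_graph_delete_vertex: "acyclic_graph V E \<Longrightarrow> acyclic_graph (V - {u}) {e\<in>E. u \<notin> e}"
  unfolding acyclic_graph_def is_cycle_def adj_delete_vertex by blast

definition is_path :: "'a set \<Rightarrow> 'a set set \<Rightarrow> 'a list \<Rightarrow> bool" where
  "is_path V E ps \<longleftrightarrow> ps \<noteq> [] \<and> distinct ps \<and> set ps \<subseteq> V \<and>
     (\<forall>i. Suc i < length ps \<longrightarrow> adj E (ps ! i) (ps ! Suc i))"

lemma is_path_rev: "is_path V E ps \<Longrightarrow> is_path V E (rev ps)"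
  unfolding is_path_def
proof (intro conjI allI impI; (elim conjE)?)
  fix i assume steps: "\<forall>i. Suc i < length ps \<longrightarrow> adj E (ps ! i) (ps ! Suc i)"
    and i: "Suc i < length (rev ps)"
  have "adj E (ps ! (length ps - Suc (Suc i))) (ps ! Suc (length ps - Suc (Suc i)))"
    using steps i by auto
  moreover have "Suc (length ps - Suc (Suc i)) = length ps - Suc i" using i by auto
  ultimately show "adj E (rev ps ! i) (rev ps ! Suc i)"
    using i by (simp add: rev_nth adj_commute)
qed auto

lemma length_path_le_card: "finite V \<Longrightarrow> is_path V E ps \<Longrightarrow> length ps \<le> card V"
  unfolding is_path_def by (metis card_mono distinct_card)

lemma exists_longest_path:
  assumes "finite V" and "v \<in> V"
  obtains ps where "is_path V E ps" and "\<And>qs. is_path V E qs \<Longrightarrow> length qs \<le> length ps"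
proof -
  have "is_path V E [v]" using assms(2) by (simp add: is_path_def)
  moreover have "\<forall>qs. is_path V E qs \<longrightarrow> length qs < Suc (card V)"
    using length_path_le_card[OF assms(1)] by (simp add: less_Suc_eq_le)
  ultimately show ?thesis
    using Lattices_Big.ex_has_greatest_nat[of "is_path V E" _ length] that by blast
qed

text \<open>Any neighbour of the last vertex of a longest path lies on the path, so by acyclicity
  it is the penultimate vertex.\<close>
lemma longest_path_last_is_leaf:
  assumes sg: "simple_graph V E" and ac: "acyclic_graph V E"
    and p: "is_path V E ps" and len: "length ps \<ge> 2"
    and longest: "\<And>qs. is_path V E qs \<Longrightarrow> length qs \<le> length ps"
    and w: "adj E (last ps) w"
  shows "w = ps ! (length ps - 2)"
proof -
  define k where "k = length ps - 1"
  have lastk: "last ps = ps ! k" using p len unfolding k_def is_path_def by (simp add: last_conv_nth)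
  have "w \<in> set ps"
  proof (rule ccontr)
    assume w_new: "w \<notin> set ps"
    have "adj E ((ps @ [w]) ! i) ((ps @ [w]) ! Suc i)" if "Suc i < length (ps @ [w])" for i
    proof (cases "Suc i < length ps")
      case False
      then have "i = k" using that unfolding k_def by simp
      then show ?thesis using w lastk len unfolding k_def by (auto simp: nth_append)
    qed (use p in \<open>simp add: is_path_def nth_append\<close>)
    then have "is_path V E (ps @ [w])"
      using p w_new simple_graph_adj_in[OF sg w] unfolding is_path_def by auto
    then show False using longest[of "ps @ [w]"] by simp
  qed
  then obtain i where i: "i < length ps" "ps ! i = w" by (metis in_set_conv_nth)
  have "i \<noteq> k" using simple_graph_not_adj_self[OF sg] w lastk i by auto
  show ?thesis
  proof (rule ccontr)
    assume "w \<noteq> ps ! (length ps - 2)"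
    then have "i \<noteq> length ps - 2" using i by auto
    then have "i + 1 < k" using i \<open>i \<noteq> k\<close> unfolding k_def by linarith
    then have "is_cycle V E (drop i ps)"
      using p w i lastk unfolding is_cycle_def is_path_def k_def
      by (auto simp: last_drop hd_drop_conv_nth dest: in_set_dropD)
    then show False using ac unfolding acyclic_graph_def by blast
  qed
qed

lemma acyclic_graph_has_leaf:
  assumes sg: "simple_graph V E" and ac: "acyclic_graph V E" and v: "v \<in> V"
    and two: "card V \<ge> 2"
  obtains u where "u \<in> V" "u \<noteq> v" "\<And>w w'. adj E u w \<Longrightarrow> adj E u w' \<Longrightarrow> w = w'"
proof -
  have fin: "finite V" using sg unfolding simple_graph_def by auto
  obtain ps where p: "is_path V E ps"
    and longest: "\<And>qs. is_path V E qs \<Longrightarrow> length qs \<le> length ps"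
    using exists_longest_path[OF fin v, where E=E] by blast
  show ?thesis
  proof (cases "length ps \<ge> 2")
    case False
    have no_edge: "\<not> adj E a b" for a b
    proof
      assume ab: "adj E a b"
      then have "is_path V E [a, b]"
        using simple_graph_adj_in[OF sg ab] simple_graph_not_adj_self[OF sg, of a]
        by (auto simp: is_path_def nth_Cons split: nat.splits)
      then show False using longest[of "[a, b]"] False by simp
    qed
    have "card (V - {v}) \<ge> 1" using two v by (simp add: card_Diff_singleton)
    then obtain u where "u \<in> V - {v}" by (metis card.empty ex_in_conv not_one_le_zero)
    then show ?thesis using that no_edge by blast
  next
    case True
    have last_leaf: "w = w'" if "adj E (last ps) w" "adj E (last ps) w'" for w w'
      using longest_path_last_is_leaf[OF sg ac p True longest that(1)]
        longest_path_last_is_leaf[OF sg ac p True longest that(2)] by simp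
    have rev_longest: "length qs \<le> length (rev ps)" if "is_path V E qs" for qs
      using longest[OF that] by simp
    have hd_nbr: "w = rev ps ! (length ps - 2)" if "adj E (last (rev ps)) w" for w
      using longest_path_last_is_leaf[OF sg ac is_path_rev[OF p] _ rev_longest that] True by simp
    have hd_leaf: "w = w'" if "adj E (hd ps) w" "adj E (hd ps) w'" for w w'
      using hd_nbr[of w] hd_nbr[of w'] that by (simp add: last_rev)
    have "last ps \<noteq> hd ps"
      using p True unfolding is_path_def by (cases ps) (auto simp: last_conv_nth)
    moreover have "last ps \<in> V" "hd ps \<in> V" using p unfolding is_path_def by auto
    ultimately consider "last ps \<in> V" "last ps \<noteq> v" | "hd ps \<in> V" "hd ps \<noteq> v" by metis
    then show ?thesis
      by cases (use that[OF _ _ last_leaf] that[OF _ _ hd_leaf] in auto)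
  qed
qed

lemma acyclic_graph_leaf_parent:
  assumes sg: "simple_graph V E" and "acyclic_graph V E" "v \<in> V" "card V \<ge> 2"
  obtains u w where "u \<in> V" "u \<noteq> v" "w \<in> V - {u}" "\<And>w'. adj E u w' \<Longrightarrow> w' = w"
proof -
  obtain u where u: "u \<in> V" "u \<noteq> v" and leaf: "\<And>w w'. adj E u w \<Longrightarrow> adj E u w' \<Longrightarrow> w = w'"
    using acyclic_graph_has_leaf[OF assms] by blast
  show ?thesis
  proof (cases "\<exists>w. adj E u w")
    case True
    then obtain w where "adj E u w" by blast
    moreover from this have "w \<in> V - {u}"
      using simple_graph_adj_in[OF sg] simple_graph_not_adj_self[OF sg] by blast
    ultimately show ?thesis using that u leaf by blast
  next
    case False
    then show ?thesis using that[of u v] u assms(3) by blast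
  qed
qed

section \<open>Greedy embedding of forests\<close>

definition blowup_map :: "('a \<Rightarrow> 'b \<times> 'b) \<Rightarrow> 'a \<times> bool \<Rightarrow> 'b" where
  "blowup_map g = (\<lambda>(u, i). if i then snd (g u) else fst (g u))"

definition robustly_extendable :: "('b \<times> 'b \<Rightarrow> 'b \<times> 'b \<Rightarrow> bool) \<Rightarrow> ('b \<times> 'b) set \<Rightarrow> nat \<Rightarrow> bool"
  where "robustly_extendable R D s \<longleftrightarrow> (\<forall>P\<in>D. \<forall>S. finite S \<longrightarrow> card S \<le> s \<longrightarrow>
     (\<exists>Q\<in>D. R P Q \<and> fst Q \<notin> S \<and> snd Q \<notin> S))"

definition pair_embedding ::
  "'a set \<Rightarrow> 'a set set \<Rightarrow> ('b \<times> 'b \<Rightarrow> 'b \<times> 'b \<Rightarrow> bool) \<Rightarrow> ('b \<times> 'b) set \<Rightarrow> ('a \<Rightarrow> 'b \<times> 'b) \<Rightarrow> bool"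
  where "pair_embedding V E R D g \<longleftrightarrow> g ` V \<subseteq> D \<and> inj_on (blowup_map g) (V \<times> UNIV) \<and>
     (\<forall>u\<in>V. \<forall>w\<in>V. adj E u w \<longrightarrow> R (g u) (g w))"

lemma card_blowup_map_image: "finite V \<Longrightarrow> card (blowup_map g ` (V \<times> UNIV)) \<le> 2 * card V"
  using card_image_le[of "V \<times> UNIV" "blowup_map g"] by (simp add: card_cartesian_product)

lemma inj_on_blowup_map_update:
  assumes inj: "inj_on (blowup_map g) (V \<times> UNIV)" and u: "u \<notin> V"
    and Q: "fst Q \<noteq> snd Q" "fst Q \<notin> blowup_map g ` (V \<times> UNIV)" "snd Q \<notin> blowup_map g ` (V \<times> UNIV)"
  shows "inj_on (blowup_map (g(u := Q))) (insert u V \<times> UNIV)"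
proof -
  have same: "blowup_map (g(u := Q)) x = blowup_map g x" if x: "x \<in> V \<times> UNIV" for x
  proof -
    obtain a i where "x = (a, i)" "a \<noteq> u" using x u by (cases x) auto
    then show ?thesis by (simp add: blowup_map_def)
  qed
  have "inj_on (blowup_map (g(u := Q))) (V \<times> UNIV) \<longleftrightarrow> inj_on (blowup_map g) (V \<times> UNIV)"
    by (rule inj_on_cong) (rule same)
  then have inj_old: "inj_on (blowup_map (g(u := Q))) (V \<times> UNIV)" using inj by simp
  have image_old: "blowup_map (g(u := Q)) ` (V \<times> UNIV) = blowup_map g ` (V \<times> UNIV)"
    using image_cong[OF refl same] .
  have image_new: "blowup_map (g(u := Q)) ` ({u} \<times> UNIV) = {fst Q, snd Q}"
    by (force simp: blowup_map_def UNIV_bool)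
  have inj_new: "inj_on (blowup_map (g(u := Q))) ({u} \<times> UNIV)"
    using Q(1) by (auto simp: inj_on_def blowup_map_def UNIV_bool)
  have split: "insert u V \<times> UNIV = V \<times> UNIV \<union> {u} \<times> UNIV" by auto
  have diffs: "V \<times> UNIV - {u} \<times> UNIV = V \<times> UNIV" "{u} \<times> UNIV - V \<times> UNIV = {u} \<times> UNIV"
    using u by auto
  show ?thesis
    unfolding split inj_on_Un diffs image_old image_new using inj_old inj_new Q(2,3) by simp
qed

lemma adj_preserved_by_leaf_update:
  assumes sg: "simple_graph V E" and R: "symp R"
    and parent: "\<And>w'. adj E u w' \<Longrightarrow> w' = w" and Rw: "R (g w) Q"
    and old: "\<forall>x\<in>V - {u}. \<forall>y\<in>V - {u}. adj E x y \<longrightarrow> R (g x) (g y)"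
  shows "\<forall>x\<in>V. \<forall>y\<in>V. adj E x y \<longrightarrow> R ((g(u := Q)) x) ((g(u := Q)) y)"
proof (intro ballI impI)
  fix x y assume xy: "x \<in> V" "y \<in> V" "adj E x y"
  consider "x = u" | "y = u" | "x \<in> V - {u}" "y \<in> V - {u}" using xy by blast
  then show "R ((g(u := Q)) x) ((g(u := Q)) y)"
  proof cases
    case 1
    then have "y = w" "y \<noteq> u" using parent xy simple_graph_not_adj_self[OF sg] by auto
    then show ?thesis using 1 sympD[OF R Rw] by simp
  next
    case 2
    then have "adj E u x" using xy(3) by (simp add: adj_def insert_commute)
    then have "x = w" "x \<noteq> u" using parent simple_graph_not_adj_self[OF sg] by auto
    then show ?thesis using 2 Rw by simp
  next
    case 3
    then show ?thesis using old xy by auto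
  qed
qed

lemma pair_embedding_extend_leaf:
  assumes sg: "simple_graph V E" and R: "symp R" and u: "u \<in> V"
    and parent: "\<And>w'. adj E u w' \<Longrightarrow> w' = w"
    and g: "pair_embedding (V - {u}) {e\<in>E. u \<notin> e} R D g"
    and Q: "Q \<in> D" "R (g w) Q" "fst Q \<noteq> snd Q"
      "fst Q \<notin> blowup_map g ` ((V - {u}) \<times> UNIV)" "snd Q \<notin> blowup_map g ` ((V - {u}) \<times> UNIV)"
  shows "pair_embedding V E R D (g(u := Q))"
proof -
  have "inj_on (blowup_map (g(u := Q))) (insert u (V - {u}) \<times> UNIV)"
    using g Q(3-5) by (intro inj_on_blowup_map_update) (auto simp: pair_embedding_def)
  moreover have "\<forall>x\<in>V - {u}. \<forall>y\<in>V - {u}. adj E x y \<longrightarrow> R (g x) (g y)"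
    using g unfolding pair_embedding_def adj_delete_vertex by blast
  ultimately show ?thesis
    using adj_preserved_by_leaf_update[where g=g, OF sg R parent Q(2)] g Q(1) u
    unfolding pair_embedding_def by (auto simp: insert_absorb)
qed

text \<open>Remove a leaf other than v, embed the rest, and send the leaf to an R-neighbour of the
  image of its parent that avoids the at most s vertices used so far.\<close>
lemma forest_embeds_in_robust_pair_graph:
  assumes "simple_graph V E" "acyclic_graph V E" "v \<in> V" "2 * card V \<le> s"
    and R: "symp R" and D: "robustly_extendable R D s"
    and P0: "P0 \<in> D" and D_distinct: "\<forall>P\<in>D. fst P \<noteq> snd P"
  shows "\<exists>g. g v = P0 \<and> pair_embedding V E R D g"
  using assms(1-4)
proof (induction "card V" arbitrary: V E rule: less_induct)
  case less
  have fin: "finite V" using less.prems(1) unfolding simple_graph_def by auto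
  show ?case
  proof (cases "card V \<ge> 2")
    case False
    moreover have "card V \<noteq> 0" using less.prems(3) fin by auto
    ultimately have "card V = 1" by linarith
    then have "V = {v}" using less.prems(3) by (metis card_1_singletonE singletonD)
    then have "pair_embedding V E R D (\<lambda>_. P0)"
      using D_distinct P0 simple_graph_not_adj_self[OF less.prems(1)]
      by (auto simp: pair_embedding_def inj_on_def blowup_map_def)
    then show ?thesis by (intro exI[of _ "\<lambda>_. P0"]) simp
  next
    case True
    obtain u w where u: "u \<in> V" "u \<noteq> v" and w: "w \<in> V - {u}"
      and parent: "\<And>w'. adj E u w' \<Longrightarrow> w' = w"
      using acyclic_graph_leaf_parent[OF less.prems(1-3) True] by blast
    define V' where "V' = V - {u}"
    have smaller: "card V' < card V" unfolding V'_def using fin u(1) by (rule card_Diff1_less)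
    obtain g' where g'_v: "g' v = P0" and g': "pair_embedding V' {e\<in>E. u \<notin> e} R D g'"
      using less.hyps[OF smaller] less.prems u
        simple_graph_delete_vertex[OF less.prems(1)] acyclic_graph_delete_vertex[OF less.prems(2)]
      unfolding V'_def by force
    have "finite (blowup_map g' ` (V' \<times> UNIV))" "card (blowup_map g' ` (V' \<times> UNIV)) \<le> s"
      using card_blowup_map_image[of V' g'] smaller less.prems(4) fin unfolding V'_def by auto
    moreover have "g' w \<in> D" using g' w unfolding pair_embedding_def V'_def by blast
    ultimately obtain Q where Q: "Q \<in> D" "R (g' w) Q"
      "fst Q \<notin> blowup_map g' ` (V' \<times> UNIV)" "snd Q \<notin> blowup_map g' ` (V' \<times> UNIV)"
      using D[unfolded robustly_extendable_def, rule_format, of "g' w"] by blast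
    have "pair_embedding V E R D (g'(u := Q))"
      using pair_embedding_extend_leaf[OF less.prems(1) R u(1) parent, of D g' Q] g' Q D_distinct
      unfolding V'_def by blast
    moreover have "(g'(u := Q)) v = P0" using g'_v u(2) by simp
    ultimately show ?thesis by blast
  qed
qed

lemma card_filter_eq_sum: "finite A \<Longrightarrow> card {a\<in>A. P a} = (\<Sum>a\<in>A. if P a then 1 else 0)"
  by (simp add: sum.inter_filter[symmetric])

lemma sum_card_filter_swap:
  assumes "finite A" "finite B"
  shows "(\<Sum>a\<in>A. card {b\<in>B. r a b}) = (\<Sum>b\<in>B. card {a\<in>A. r a b})"
  using assms by (simp add: card_filter_eq_sum sum.swap[of _ A B])

text \<open>Repeatedly deleting a vertex whose degree is below its weight keeps the number of
  edges above the total weight, so the process stops at a nonempty subgraph.\<close>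
lemma exists_weighted_min_degree_subgraph:
  fixes r :: "'p \<Rightarrow> 'q \<Rightarrow> bool" and wa :: "'p \<Rightarrow> nat" and wb :: "'q \<Rightarrow> nat"
  assumes "finite A" "finite B"
    and "(\<Sum>a\<in>A. wa a) + (\<Sum>b\<in>B. wb b) < (\<Sum>a\<in>A. card {b\<in>B. r a b})"
  shows "\<exists>A'\<subseteq>A. \<exists>B'\<subseteq>B. A' \<noteq> {} \<and> (\<forall>a\<in>A'. wa a \<le> card {b\<in>B'. r a b}) \<and>
           (\<forall>b\<in>B'. wb b \<le> card {a\<in>A'. r a b})"
  using assms
proof (induction "card A + card B" arbitrary: A B rule: less_induct)
  case less
  consider a where "a \<in> A" "card {b\<in>B. r a b} < wa a"
    | b where "b \<in> B" "card {a\<in>A. r a b} < wb b"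
    | "\<forall>a\<in>A. wa a \<le> card {b\<in>B. r a b}" "\<forall>b\<in>B. wb b \<le> card {a\<in>A. r a b}"
    by (meson not_le)
  then show ?case
  proof cases
    case (1 a)
    have smaller: "card (A - {a}) + card B < card A + card B"
      using card_Diff1_less[OF less.prems(1) 1(1)] by simp
    have "(\<Sum>x\<in>A - {a}. wa x) + (\<Sum>b\<in>B. wb b) < (\<Sum>x\<in>A - {a}. card {b\<in>B. r x b})"
      using less.prems 1 by (simp add: sum.remove)
    from less.hyps[OF smaller finite_Diff[OF less.prems(1), of "{a}"] less.prems(2) this]
    show ?thesis by (meson Diff_subset subset_trans)
  next
    case (2 b)
    have smaller: "card A + card (B - {b}) < card A + card B"
      using card_Diff1_less[OF less.prems(2) 2(1)] by simp
    have "(\<Sum>x\<in>A. wa x) + (\<Sum>x\<in>B - {b}. wb x) < (\<Sum>y\<in>B - {b}. card {a\<in>A. r a y})"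
      using less.prems 2 sum_card_filter_swap[of A B r] by (simp add: sum.remove)
    then have "(\<Sum>x\<in>A. wa x) + (\<Sum>x\<in>B - {b}. wb x) < (\<Sum>a\<in>A. card {y\<in>B - {b}. r a y})"
      using sum_card_filter_swap[of A "B - {b}" r] less.prems(1,2) by simp
    from less.hyps[OF smaller less.prems(1) finite_Diff[OF less.prems(2), of "{b}"] this]
    show ?thesis by (meson Diff_subset subset_trans)
  next
    case 3
    have "A \<noteq> {}" using less.prems(3) by auto
    then show ?thesis using 3 by blast
  qed
qed

section \<open>Pairs of vertices spanning a K_{2,2}\<close>

definition distinct_pairs :: "'b set \<Rightarrow> ('b \<times> 'b) set" where
  "distinct_pairs W = {(a, b). a \<in> W \<and> b \<in> W \<and> a \<noteq> b}"

definition nbrs :: "'b set \<Rightarrow> 'b set set \<Rightarrow> 'b \<Rightarrow> 'b set" where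
  "nbrs W E u = {w\<in>W. adj E u w}"

definition common_nbrs :: "'b set \<Rightarrow> 'b set set \<Rightarrow> 'b \<times> 'b \<Rightarrow> 'b set" where
  "common_nbrs U E P = {u\<in>U. adj E u (fst P) \<and> adj E u (snd P)}"

definition spans_K22 :: "'b set set \<Rightarrow> 'b \<times> 'b \<Rightarrow> 'b \<times> 'b \<Rightarrow> bool" where
  "spans_K22 E P Q \<longleftrightarrow> adj E (fst P) (fst Q) \<and> adj E (fst P) (snd Q) \<and>
      adj E (snd P) (fst Q) \<and> adj E (snd P) (snd Q)"

lemma finite_distinct_pairs: "finite W \<Longrightarrow> finite (distinct_pairs W)"
  unfolding distinct_pairs_def by (rule finite_subset[of _ "W \<times> W"]) auto

lemma card_distinct_pairs: "finite W \<Longrightarrow> card (distinct_pairs W) = card W * (card W - 1)"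
proof -
  assume fin: "finite W"
  have diag: "distinct_pairs W = W \<times> W - (\<lambda>x. (x, x)) ` W" unfolding distinct_pairs_def by auto
  have "card ((\<lambda>x. (x, x)) ` W) = card W" by (rule card_image) (auto simp: inj_on_def)
  then have "card (distinct_pairs W) = card W * card W - card W"
    unfolding diag using fin by (subst card_Diff_subset) (auto simp: card_cartesian_product)
  then show ?thesis by (simp add: diff_mult_distrib2)
qed

lemma spans_K22_commute: "spans_K22 E P Q \<longleftrightarrow> spans_K22 E Q P"
  unfolding spans_K22_def by (auto simp: adj_commute)

lemma K22_partners_right:
  "P \<in> distinct_pairs X \<Longrightarrow>
     {Q\<in>distinct_pairs Y. spans_K22 E P Q} = distinct_pairs (common_nbrs Y E P)"
  unfolding distinct_pairs_def common_nbrs_def spans_K22_def by (auto simp: adj_commute)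

lemma K22_partners_left:
  "Q \<in> distinct_pairs Y \<Longrightarrow>
     {P\<in>distinct_pairs X. spans_K22 E P Q} = distinct_pairs (common_nbrs X E Q)"
  unfolding distinct_pairs_def common_nbrs_def spans_K22_def by (auto simp: adj_commute)

definition codegree_sum :: "'b set \<Rightarrow> 'b set \<Rightarrow> 'b set set \<Rightarrow> nat" where
  "codegree_sum X Y E = (\<Sum>P\<in>distinct_pairs X. card (common_nbrs Y E P))"

definition K22_count :: "'b set \<Rightarrow> 'b set \<Rightarrow> 'b set set \<Rightarrow> nat" where
  "K22_count X Y E =
     (\<Sum>P\<in>distinct_pairs X. card (common_nbrs Y E P) * (card (common_nbrs Y E P) - 1))"

definition codegree_positive_pairs :: "'b set \<Rightarrow> 'b set \<Rightarrow> 'b set set \<Rightarrow> ('b \<times> 'b) set" where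
  "codegree_positive_pairs X Y E = {P\<in>distinct_pairs X. 0 < card (common_nbrs Y E P)}"

lemma finite_common_nbrs: "finite U \<Longrightarrow> finite (common_nbrs U E P)"
  unfolding common_nbrs_def by simp

lemma codegree_sum_eq_sum_nbrs:
  assumes "finite X" "finite Y"
  shows "codegree_sum X Y E = (\<Sum>y\<in>Y. card (nbrs X E y) * (card (nbrs X E y) - 1))"
proof -
  have "codegree_sum X Y E =
        (\<Sum>y\<in>Y. card {P\<in>distinct_pairs X. adj E y (fst P) \<and> adj E y (snd P)})"
    unfolding codegree_sum_def common_nbrs_def using assms finite_distinct_pairs
    by (intro sum_card_filter_swap)
  also have "\<dots> = (\<Sum>y\<in>Y. card (distinct_pairs (nbrs X E y)))"
    by (intro sum.cong refl arg_cong[where f=card]) (auto simp: distinct_pairs_def nbrs_def)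
  also have "\<dots> = (\<Sum>y\<in>Y. card (nbrs X E y) * (card (nbrs X E y) - 1))"
    using assms by (intro sum.cong refl card_distinct_pairs) (auto simp: nbrs_def)
  finally show ?thesis .
qed

text \<open>Both sides count the pairs (P, Q) of pairs from X and Y spanning a K_{2,2}.\<close>
lemma K22_count_commute:
  assumes "finite X" "finite Y"
  shows "K22_count X Y E = K22_count Y X E"
proof -
  have "K22_count X Y E = (\<Sum>P\<in>distinct_pairs X. card {Q\<in>distinct_pairs Y. spans_K22 E P Q})"
    unfolding K22_count_def using assms
    by (intro sum.cong refl) (simp add: K22_partners_right card_distinct_pairs finite_common_nbrs)
  also have "\<dots> = (\<Sum>Q\<in>distinct_pairs Y. card {P\<in>distinct_pairs X. spans_K22 E P Q})"
    using assms by (intro sum_card_filter_swap finite_distinct_pairs)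
  also have "\<dots> = K22_count Y X E"
    unfolding K22_count_def using assms
    by (intro sum.cong refl) (simp add: K22_partners_left card_distinct_pairs finite_common_nbrs)
  finally show ?thesis .
qed

lemma sum_K22_partners_eq_K22_count:
  assumes "finite X" "finite Y"
  shows "(\<Sum>P\<in>codegree_positive_pairs X Y E.
            card {Q\<in>codegree_positive_pairs Y X E. spans_K22 E P Q}) = K22_count X Y E"
proof -
  have partners: "{Q\<in>codegree_positive_pairs Y X E. spans_K22 E P Q} =
      distinct_pairs (common_nbrs Y E P)" if P: "P \<in> distinct_pairs X" for P
  proof -
    have "fst P \<in> common_nbrs X E Q" if "spans_K22 E P Q" for Q
      using P that unfolding distinct_pairs_def common_nbrs_def spans_K22_def by auto
    then have "{Q\<in>codegree_positive_pairs Y X E. spans_K22 E P Q} =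
               {Q\<in>distinct_pairs Y. spans_K22 E P Q}"
      using assms(1) unfolding codegree_positive_pairs_def
      by (auto simp: card_gt_0_iff finite_common_nbrs)
    then show ?thesis using K22_partners_right[OF P] by simp
  qed
  have "(\<Sum>P\<in>codegree_positive_pairs X Y E.
            card {Q\<in>codegree_positive_pairs Y X E. spans_K22 E P Q}) =
        (\<Sum>P\<in>codegree_positive_pairs X Y E.
            card (common_nbrs Y E P) * (card (common_nbrs Y E P) - 1))"
    using partners assms(2) unfolding codegree_positive_pairs_def
    by (intro sum.cong refl) (simp add: card_distinct_pairs finite_common_nbrs)
  also have "\<dots> = K22_count X Y E"
    unfolding K22_count_def codegree_positive_pairs_def
    by (rule sum.mono_neutral_left) (auto simp: assms finite_distinct_pairs)
  finally show ?thesis .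
qed

lemma card_pairs_meeting_le:
  assumes "finite C" "finite S"
  shows "card {q\<in>C \<times> C. fst q \<in> S \<or> snd q \<in> S} \<le> 2 * card S * card C"
proof -
  have "{q\<in>C \<times> C. fst q \<in> S \<or> snd q \<in> S} = (S \<inter> C) \<times> C \<union> C \<times> (S \<inter> C)" by auto
  then have "card {q\<in>C \<times> C. fst q \<in> S \<or> snd q \<in> S} \<le> card ((S \<inter> C) \<times> C) + card (C \<times> (S \<inter> C))"
    by (simp add: card_Un_le)
  also have "\<dots> = 2 * (card (S \<inter> C) * card C)" by (simp add: card_cartesian_product)
  also have "\<dots> \<le> 2 * (card S * card C)" using assms(2) by (simp add: card_mono)
  finally show ?thesis by simp
qed

text \<open>All K_{2,2}-partners of P lie in the square of its common neighbourhood, and at most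
  2 |S| |common_nbrs Y E P| of these pairs meet S.\<close>
lemma K22_partner_avoiding:
  assumes P: "P \<in> distinct_pairs X" and B: "B \<subseteq> distinct_pairs Y" and "finite Y" "finite S"
    and many: "2 * card S * card (common_nbrs Y E P) < card {Q\<in>B. spans_K22 E P Q}"
  shows "\<exists>Q\<in>B. spans_K22 E P Q \<and> fst Q \<notin> S \<and> snd Q \<notin> S"
proof (rule ccontr)
  define C where "C = common_nbrs Y E P"
  have "finite C" using \<open>finite Y\<close> unfolding C_def by (rule finite_common_nbrs)
  assume "\<not> ?thesis"
  then have "{Q\<in>B. spans_K22 E P Q} \<subseteq> {q\<in>C \<times> C. fst q \<in> S \<or> snd q \<in> S}"
    using K22_partners_right[OF P, of Y E] B unfolding C_def distinct_pairs_def by blast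
  then have "card {Q\<in>B. spans_K22 E P Q} \<le> card {q\<in>C \<times> C. fst q \<in> S \<or> snd q \<in> S}"
    using \<open>finite C\<close> by (intro card_mono) auto
  also have "\<dots> \<le> 2 * card S * card C" using \<open>finite C\<close> \<open>finite S\<close> by (rule card_pairs_meeting_le)
  finally show False using many unfolding C_def by simp
qed

lemma robustly_extendable_K22_if_min_degree:
  fixes E :: "'b set set"
  assumes fX: "finite X" and fY: "finite Y"
    and AX: "A \<subseteq> distinct_pairs X" and BY: "B \<subseteq> distinct_pairs Y"
    and deg_A: "\<forall>P\<in>A. 2 * s * card (common_nbrs Y E P) + 1 \<le> card {Q\<in>B. spans_K22 E P Q}"
    and deg_B: "\<forall>Q\<in>B. 2 * s * card (common_nbrs X E Q) + 1 \<le> card {P\<in>A. spans_K22 E P Q}"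
  shows "robustly_extendable (spans_K22 E) (A \<union> B) s"
  unfolding robustly_extendable_def
proof (intro ballI allI impI)
  fix P and S :: "'b set" assume P: "P \<in> A \<union> B" and S: "finite S" "card S \<le> s"
  show "\<exists>Q\<in>A \<union> B. spans_K22 E P Q \<and> fst Q \<notin> S \<and> snd Q \<notin> S"
  proof (cases "P \<in> A")
    case True
    have "2 * card S * card (common_nbrs Y E P) \<le> 2 * s * card (common_nbrs Y E P)"
      using S(2) by simp
    then have "2 * card S * card (common_nbrs Y E P) < card {Q\<in>B. spans_K22 E P Q}"
      using deg_A[rule_format, OF True] by linarith
    then show ?thesis using K22_partner_avoiding[of P X B Y S E] True AX BY fY S(1) by blast
  next
    case False
    then have "P \<in> B" using P by blast
    have "2 * card S * card (common_nbrs X E P) \<le> 2 * s * card (common_nbrs X E P)"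
      using S(2) by simp
    then have "2 * card S * card (common_nbrs X E P) < card {R\<in>A. spans_K22 E R P}"
      using deg_B[rule_format, OF \<open>P \<in> B\<close>] by linarith
    moreover have "{R\<in>A. spans_K22 E R P} = {R\<in>A. spans_K22 E P R}"
      using spans_K22_commute by blast
    ultimately show ?thesis using K22_partner_avoiding[of P Y A X S E] \<open>P \<in> B\<close> AX BY fX S(1) by auto
  qed
qed

lemma sum_positive_weights_le:
  fixes c :: "'p \<Rightarrow> nat"
  assumes "finite D"
  shows "(\<Sum>P\<in>{P\<in>D. 0 < c P}. k * c P + 1) \<le> (k + 1) * (\<Sum>P\<in>D. c P)"
proof -
  have "(\<Sum>P\<in>{P\<in>D. 0 < c P}. k * c P + 1) \<le> (\<Sum>P\<in>{P\<in>D. 0 < c P}. (k + 1) * c P)"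
    by (intro sum_mono) auto
  also have "\<dots> \<le> (\<Sum>P\<in>D. (k + 1) * c P)" using assms by (intro sum_mono2) auto
  finally show ?thesis by (simp add: sum_distrib_left)
qed

text \<open>The K_{2,2}-partner graph on the codegree-positive pairs has more edges than the total of the
  weights 2s * codegree + 1, and its subgraph of large weighted minimum degree is robust.\<close>
lemma robust_K22_pair_family:
  fixes E :: "'b set set"
  assumes fX: "finite X" and fY: "finite Y"
    and many: "(2 * s + 1) * (codegree_sum X Y E + codegree_sum Y X E) < K22_count X Y E"
  obtains A B where "A \<noteq> {}" "A \<subseteq> distinct_pairs X" "B \<subseteq> distinct_pairs Y"
    "robustly_extendable (spans_K22 E) (A \<union> B) s"
proof -
  define A0 where "A0 = codegree_positive_pairs X Y E"
  define B0 where "B0 = codegree_positive_pairs Y X E"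
  have fin: "finite A0" "finite B0"
    unfolding A0_def B0_def codegree_positive_pairs_def using fX fY
    by (simp_all add: finite_distinct_pairs)
  have "(\<Sum>P\<in>A0. 2 * s * card (common_nbrs Y E P) + 1) +
        (\<Sum>Q\<in>B0. 2 * s * card (common_nbrs X E Q) + 1) < (\<Sum>P\<in>A0. card {Q\<in>B0. spans_K22 E P Q})"
    using many sum_K22_partners_eq_K22_count[OF fX fY]
      sum_positive_weights_le[of "distinct_pairs X" "2 * s" "\<lambda>P. card (common_nbrs Y E P)"]
      sum_positive_weights_le[of "distinct_pairs Y" "2 * s" "\<lambda>Q. card (common_nbrs X E Q)"]
    unfolding A0_def B0_def codegree_positive_pairs_def codegree_sum_def
    by (simp add: fX fY finite_distinct_pairs add_mult_distrib2)
  from exists_weighted_min_degree_subgraph[OF fin this]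
  obtain A B where AB: "A \<subseteq> A0" "B \<subseteq> B0" "A \<noteq> {}"
    and deg_A: "\<forall>P\<in>A. 2 * s * card (common_nbrs Y E P) + 1 \<le> card {Q\<in>B. spans_K22 E P Q}"
    and deg_B: "\<forall>Q\<in>B. 2 * s * card (common_nbrs X E Q) + 1 \<le> card {P\<in>A. spans_K22 E P Q}"
    by blast
  have AX: "A \<subseteq> distinct_pairs X" and BY: "B \<subseteq> distinct_pairs Y"
    using AB unfolding A0_def B0_def codegree_positive_pairs_def by auto
  show ?thesis
    by (rule that[OF AB(3) AX BY robustly_extendable_K22_if_min_degree[OF fX fY AX BY deg_A deg_B]])
qed

section \<open>Estimates by Cauchy-Schwarz\<close>

lemma excess_over_mean_square:
  fixes Q S m c :: real
  assumes "S\<^sup>2 / m - S \<le> Q" "c * m < S" "0 < m" "0 \<le> c"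
  shows "(c - 1) * S < Q"
proof -
  have "0 \<le> c * m" using assms(3,4) by simp
  then have "0 < S" using assms(2) by linarith
  have "c < S / m" using assms(2,3) by (simp add: pos_less_divide_eq)
  then have "S * c < S * (S / m)" using \<open>0 < S\<close> by (rule mult_strict_left_mono)
  then show ?thesis using assms(1) by (simp add: power2_eq_square algebra_simps)
qed

text \<open>With d = C sqrt n bounding the degrees in Y from below, S < R forces d < N + 1, so the
  number e of edges is at least N d >= 2 n, and convexity gives R >= e^2/n - e >= C^2 N^2 - N d.\<close>
lemma second_moment_large:
  fixes C n N d e S R :: real
  assumes C: "2 \<le> C" and n: "1 \<le> n" and N: "0 \<le> N" and d: "d = C * sqrt n"
    and S_lower: "e * (d - 1) \<le> S" and R_upper: "R \<le> e * N" and R_lower: "e\<^sup>2 / n - e \<le> R"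
    and e_lower: "N * d \<le> e" and "0 < S" "S < R"
  shows "(C\<^sup>2 - 2) * N\<^sup>2 < R"
proof -
  have "0 < e"
  proof (rule ccontr)
    assume "\<not> 0 < e"
    then have "e * N \<le> 0" using N by (simp add: mult_nonpos_nonneg)
    then show False using R_upper \<open>0 < S\<close> \<open>S < R\<close> by linarith
  qed
  have "1 \<le> sqrt n" using n by simp
  then have "2 * 1 \<le> C * sqrt n" using C by (intro mult_mono) auto
  then have d2: "2 \<le> d" unfolding d by simp
  have "e * (d - 1) < e * N" using S_lower R_upper \<open>S < R\<close> by linarith
  then have dN: "d - 1 < N" using \<open>0 < e\<close> by simp
  have d_sq: "d\<^sup>2 = C\<^sup>2 * n" unfolding d using n by (simp add: power_mult_distrib)
  have "4 \<le> C\<^sup>2" using power_mono[OF C, of 2] by simp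
  then have "4 * n \<le> C\<^sup>2 * n" using n by (intro mult_right_mono) auto
  moreover have "d\<^sup>2 \<le> 2 * (N * d)" using dN d2 by (simp add: power2_eq_square)
  ultimately have Nd: "2 * n \<le> N * d" using d_sq by linarith
  have "(N * d) * (N * d / n - 1) \<le> e * (e / n - 1)"
    using e_lower Nd n by (intro mult_mono) (auto simp: divide_right_mono le_divide_eq)
  moreover have "(N * d) * (N * d / n - 1) = C\<^sup>2 * N\<^sup>2 - N * d"
    using d_sq n by (simp add: power2_eq_square field_simps)
  moreover have "e * (e / n - 1) = e\<^sup>2 / n - e" by (simp add: power2_eq_square algebra_simps)
  ultimately have "C\<^sup>2 * N\<^sup>2 - N * d \<le> e\<^sup>2 / n - e" by linarith
  moreover have "N * d < 2 * N\<^sup>2" using dN d2 N by (simp add: power2_eq_square)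
  ultimately show ?thesis using R_lower by (simp add: algebra_simps)
qed

lemma real_mult_pred: "real (d * (d - 1)) = real d * (real d - 1)"
  by (cases d) (auto simp: algebra_simps)

lemma sum_mult_pred_ge:
  fixes f :: "'a \<Rightarrow> nat"
  assumes "finite I" "card I \<le> M"
  shows "(real (\<Sum>i\<in>I. f i))\<^sup>2 / M - real (\<Sum>i\<in>I. f i) \<le> real (\<Sum>i\<in>I. f i * (f i - 1))"
proof (cases "M = 0")
  case True
  then show ?thesis using assms by simp
next
  case False
  have "(\<Sum>i\<in>I. real (f i))\<^sup>2 \<le> (\<Sum>i\<in>I. (real (f i))\<^sup>2) * card I"
    by (rule sum_squared_le_sum_of_squares)
  also have "\<dots> \<le> (\<Sum>i\<in>I. (real (f i))\<^sup>2) * M"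
    using assms(2) by (intro mult_left_mono) (auto intro: sum_nonneg)
  finally have "(\<Sum>i\<in>I. real (f i))\<^sup>2 / M \<le> (\<Sum>i\<in>I. (real (f i))\<^sup>2)"
    using False by (simp add: divide_le_eq)
  then show ?thesis
    by (simp add: real_mult_pred power2_eq_square algebra_simps sum_subtractf)
qed

lemma K22_count_ge:
  assumes "finite X"
  shows "(real (codegree_sum X Y E))\<^sup>2 / (real (card X))\<^sup>2 - real (codegree_sum X Y E)
           \<le> real (K22_count X Y E)"
proof -
  have "card (distinct_pairs X) \<le> (card X)\<^sup>2"
    using assms by (simp add: card_distinct_pairs power2_eq_square)
  then show ?thesis
    using sum_mult_pred_ge[OF finite_distinct_pairs[OF assms], of "(card X)\<^sup>2"]
    unfolding codegree_sum_def K22_count_def by simp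
qed

text \<open>Cauchy-Schwarz on the X-side gives Q > (C - 1) S, which suffices when R <= S; otherwise
  the Y-side codegrees are large and Cauchy-Schwarz on the Y-side gives Q > (C^2 - 3) R.\<close>
lemma K22_count_arith:
  fixes C n N d e S R Q :: real and K :: nat
  assumes C: "2 * real K + 2 \<le> C" and n: "1 \<le> n" and N: "0 \<le> N" and d: "d = C * sqrt n"
    and S_big: "C * n\<^sup>2 < S" and S_lower: "e * (d - 1) \<le> S"
    and R_upper: "R \<le> e * N" and R_lower: "e\<^sup>2 / n - e \<le> R" and e_lower: "N * d \<le> e"
    and Q_S: "S\<^sup>2 / n\<^sup>2 - S \<le> Q" and Q_R: "R\<^sup>2 / N\<^sup>2 - R \<le> Q"
  shows "K * (S + R) < Q"
proof -
  have C2: "2 \<le> C" using C by simp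
  then have "0 \<le> C * n\<^sup>2" by simp
  then have "0 < S" using S_big by linarith
  show ?thesis
  proof (cases "R \<le> S")
    case True
    have "(C - 1) * S < Q" using excess_over_mean_square[OF Q_S S_big] n C2 by simp
    moreover have "K * (S + R) \<le> K * (2 * S)" using True by (intro mult_left_mono) auto
    moreover have "\<dots> \<le> (C - 1) * S" using C \<open>0 < S\<close> by (simp add: mult_right_mono)
    ultimately show ?thesis by linarith
  next
    case False
    have R_big: "(C\<^sup>2 - 2) * N\<^sup>2 < R"
      using second_moment_large[OF C2 n N d S_lower R_upper R_lower e_lower \<open>0 < S\<close>] False by simp
    have "2 * real K + 3 \<le> 2 * (2 * real K + 2)" by simp
    also have "\<dots> \<le> (2 * real K + 2)\<^sup>2"
      unfolding power2_eq_square by (intro mult_right_mono) auto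
    also have "\<dots> \<le> C\<^sup>2" using C by (intro power_mono) auto
    finally have C_sq: "2 * real K + 3 \<le> C\<^sup>2" .
    have "0 < N"
    proof (rule ccontr)
      assume "\<not> 0 < N"
      then show False using R_upper \<open>0 < S\<close> False N by simp
    qed
    then have "(C\<^sup>2 - 2 - 1) * R < Q"
      using excess_over_mean_square[OF Q_R R_big] C_sq by simp
    moreover have "K * (S + R) \<le> K * (2 * R)" using False by (intro mult_left_mono) auto
    moreover have "\<dots> \<le> (C\<^sup>2 - 2 - 1) * R" using C_sq \<open>0 < S\<close> False by (simp add: mult_right_mono)
    ultimately show ?thesis by linarith
  qed
qed

lemma bipartite_degree_eq:
  assumes "bipartite_graph X Y E" "y \<in> Y"
  shows "degree E y = card (nbrs X E y)"
proof -
  have "{x. {x, y} \<in> E} = nbrs X E y"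
  proof (intro set_eqI iffI)
    fix x assume x: "x \<in> {x. {x, y} \<in> E}"
    then obtain x' y' where "{x, y} = {x', y'}" "x' \<in> X" "y' \<in> Y"
      using assms(1) unfolding bipartite_graph_def by blast
    then have "x \<in> X" using assms unfolding bipartite_graph_def by (metis disjoint_iff doubleton_eq_iff)
    then show "x \<in> nbrs X E y" using x by (simp add: nbrs_def adj_def insert_commute)
  qed (simp add: nbrs_def adj_def insert_commute)
  then show ?thesis unfolding degree_def by simp
qed

lemma card_cherries:
  assumes "bipartite_graph X Y E"
  shows "card (cherries X Y E) = codegree_sum X Y E"
proof -
  have fin: "finite X" "finite Y" and disj: "X \<inter> Y = {}"
    using assms unfolding bipartite_graph_def by auto
  have "cherries X Y E = Sigma Y (\<lambda>y. distinct_pairs (nbrs X E y))"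
    using disj unfolding cherries_def distinct_pairs_def nbrs_def adj_def by auto
  then have "card (cherries X Y E) = (\<Sum>y\<in>Y. card (distinct_pairs (nbrs X E y)))"
    using fin by (simp add: card_SigmaI finite_distinct_pairs nbrs_def)
  also have "\<dots> = codegree_sum X Y E"
    using codegree_sum_eq_sum_nbrs[OF fin] fin by (simp add: card_distinct_pairs nbrs_def)
  finally show ?thesis .
qed

lemma sum_card_nbrs_swap:
  "finite X \<Longrightarrow> finite Y \<Longrightarrow> (\<Sum>y\<in>Y. card (nbrs X E y)) = (\<Sum>x\<in>X. card (nbrs Y E x))"
  unfolding nbrs_def by (subst sum_card_filter_swap) (auto simp: adj_commute)

lemma codegree_sum_ge_edges:
  assumes fX: "finite X" and fY: "finite Y" and deg: "\<forall>y\<in>Y. d \<le> real (card (nbrs X E y))"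
  shows "real (\<Sum>y\<in>Y. card (nbrs X E y)) * (d - 1) \<le> real (codegree_sum X Y E)"
proof -
  have "real (codegree_sum X Y E) = real (\<Sum>y\<in>Y. card (nbrs X E y) * (card (nbrs X E y) - 1))"
    using codegree_sum_eq_sum_nbrs[OF fX fY] by simp
  also have "\<dots> = (\<Sum>y\<in>Y. real (card (nbrs X E y)) * (real (card (nbrs X E y)) - 1))"
    by (simp only: of_nat_sum real_mult_pred)
  also have "\<dots> \<ge> (\<Sum>y\<in>Y. real (card (nbrs X E y)) * (d - 1))"
    using deg by (intro sum_mono mult_left_mono) auto
  finally show ?thesis by (simp add: sum_distrib_right)
qed

lemma codegree_sum_bounds:
  fixes E :: "'b set set"
  assumes fX: "finite X" and fY: "finite Y"
  defines "e \<equiv> \<Sum>y\<in>Y. card (nbrs X E y)"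
  shows "codegree_sum Y X E \<le> e * card Y"
    and "(real e)\<^sup>2 / real (card X) - real e \<le> real (codegree_sum Y X E)"
proof -
  have "card (nbrs Y E x) \<le> card Y" for x using fY unfolding nbrs_def by (simp add: card_mono)
  then have "codegree_sum Y X E \<le> (\<Sum>x\<in>X. card (nbrs Y E x) * card Y)"
    unfolding codegree_sum_eq_sum_nbrs[OF fY fX]
    by (intro sum_mono mult_le_mono order.refl le_trans[OF diff_le_self])
  then show "codegree_sum Y X E \<le> e * card Y"
    unfolding e_def sum_card_nbrs_swap[OF fX fY] by (simp add: sum_distrib_right)
  show "(real e)\<^sup>2 / real (card X) - real e \<le> real (codegree_sum Y X E)"
    using sum_mult_pred_ge[OF fX, of "card X" "\<lambda>x. card (nbrs Y E x)"]
    unfolding e_def codegree_sum_eq_sum_nbrs[OF fY fX] sum_card_nbrs_swap[OF fX fY] by simp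
qed

lemma many_K22_in_dense_bipartite_graph:
  fixes K :: nat and C :: real
  assumes bip: "bipartite_graph X Y E" and C: "2 * real K + 2 \<le> C"
    and deg: "\<forall>y\<in>Y. C * sqrt (real (card X)) \<le> real (degree E y)"
    and cher: "C * real (card X) ^ 2 < real (card (cherries X Y E))"
  shows "K * (codegree_sum X Y E + codegree_sum Y X E) < K22_count X Y E"
proof -
  have fX: "finite X" and fY: "finite Y" using bip unfolding bipartite_graph_def by auto
  define d where "d = C * sqrt (card X)"
  define e where "e = (\<Sum>y\<in>Y. card (nbrs X E y))"
  have S_big: "C * real (card X) ^ 2 < real (codegree_sum X Y E)"
    using cher card_cherries[OF bip] by simp
  moreover have "0 \<le> C * real (card X) ^ 2" using C by simp
  ultimately have "codegree_sum X Y E \<noteq> 0" by linarith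
  then have "X \<noteq> {}" unfolding codegree_sum_def distinct_pairs_def by auto
  then have n: "1 \<le> real (card X)" using fX by (simp add: Suc_leI card_gt_0_iff)
  have deg_Y: "\<forall>y\<in>Y. d \<le> real (card (nbrs X E y))"
    using deg bipartite_degree_eq[OF bip] unfolding d_def by simp
  have e_lower: "real (card Y) * d \<le> real e"
    using sum_mono[of Y "\<lambda>_. d"] deg_Y unfolding e_def by simp
  have S_lower: "real e * (d - 1) \<le> real (codegree_sum X Y E)"
    using codegree_sum_ge_edges[OF fX fY deg_Y] unfolding e_def .
  have R_upper: "real (codegree_sum Y X E) \<le> real e * real (card Y)"
    using codegree_sum_bounds(1)[OF fX fY, of E] unfolding e_def of_nat_mult[symmetric] of_nat_le_iff .
  have R_lower: "(real e)\<^sup>2 / real (card X) - real e \<le> real (codegree_sum Y X E)"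
    using codegree_sum_bounds(2)[OF fX fY, of E] unfolding e_def .
  have Q_R: "(real (codegree_sum Y X E))\<^sup>2 / (real (card Y))\<^sup>2 - real (codegree_sum Y X E)
               \<le> real (K22_count X Y E)"
    using K22_count_ge[OF fY, of X E] K22_count_commute[OF fX fY] by simp
  have "real K * (real (codegree_sum X Y E) + real (codegree_sum Y X E)) < real (K22_count X Y E)"
    by (rule K22_count_arith[OF C n of_nat_0_le_iff d_def S_big S_lower R_upper R_lower e_lower
          K22_count_ge[OF fX] Q_R])
  then show ?thesis by (simp only: of_nat_add[symmetric] of_nat_mult[symmetric] of_nat_less_iff)
qed

lemma symp_spans_K22: "symp (spans_K22 E)"
  by (rule sympI) (simp add: spans_K22_commute)

lemma spans_K22_blowup_map:
  "spans_K22 H (g u) (g w) \<Longrightarrow> adj H (blowup_map g (u, i)) (blowup_map g (w, j))"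
  unfolding spans_K22_def blowup_map_def by (cases i; cases j) auto

lemma blowup_copy_of_K22_embedding:
  assumes "g ` V \<subseteq> W \<times> W" and "inj_on (blowup_map g) (V \<times> UNIV)"
    and "\<forall>u\<in>V. \<forall>w\<in>V. adj E u w \<longrightarrow> spans_K22 H (g u) (g w)"
  shows "subgraph_copy (blowup2_V V) (blowup2_E E) W H (blowup_map g)"
  unfolding subgraph_copy_def blowup2_V_def
proof (intro conjI ballI impI)
  show "blowup_map g ` (V \<times> UNIV) \<subseteq> W"
    using assms(1) by (auto simp: blowup_map_def)
next
  fix a b assume a: "a \<in> V \<times> UNIV" and b: "b \<in> V \<times> UNIV" and ab: "{a, b} \<in> blowup2_E E"
  then obtain u w i j where uw: "{a, b} = {(u, i), (w, j)}" "{u, w} \<in> E"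
    unfolding blowup2_E_def by blast
  then have "u \<in> V" "w \<in> V" "adj E u w" using a b by (auto simp: doubleton_eq_iff adj_def)
  then have "adj H (blowup_map g (u, i)) (blowup_map g (w, j))"
    using assms(3) by (intro spans_K22_blowup_map) blast
  then show "{blowup_map g a, blowup_map g b} \<in> H"
    using uw(1) by (auto simp: doubleton_eq_iff adj_def insert_commute)
qed (use assms(2) in simp)

lemma tree_blowup_copy_if_many_K22:
  assumes sg: "simple_graph V E" and ac: "acyclic_graph V E" and v: "v \<in> V"
    and fX: "finite X" and fY: "finite Y"
    and many: "(4 * card V + 1) * (codegree_sum X Y H + codegree_sum Y X H) < K22_count X Y H"
  shows "\<exists>f. subgraph_copy (blowup2_V V) (blowup2_E E) (X \<union> Y) H f \<and>
           f (v, False) \<in> X \<and> f (v, True) \<in> X"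
proof -
  obtain A B where A: "A \<noteq> {}" "A \<subseteq> distinct_pairs X" and B: "B \<subseteq> distinct_pairs Y"
    and robust: "robustly_extendable (spans_K22 H) (A \<union> B) (2 * card V)"
    using robust_K22_pair_family[OF fX fY, of "2 * card V" H] many by (auto simp: algebra_simps)
  obtain P0 where P0: "P0 \<in> A" using A(1) by blast
  have "\<forall>P\<in>A \<union> B. fst P \<noteq> snd P" using A B unfolding distinct_pairs_def by auto
  then obtain g where g: "g v = P0" "g ` V \<subseteq> A \<union> B" "inj_on (blowup_map g) (V \<times> UNIV)"
    "\<forall>u\<in>V. \<forall>w\<in>V. adj E u w \<longrightarrow> spans_K22 H (g u) (g w)"
    using forest_embeds_in_robust_pair_graph[OF sg ac v order.refl symp_spans_K22 robust] P0
    unfolding pair_embedding_def by blast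
  have "A \<union> B \<subseteq> (X \<union> Y) \<times> (X \<union> Y)" using A(2) B unfolding distinct_pairs_def by auto
  then have "g ` V \<subseteq> (X \<union> Y) \<times> (X \<union> Y)" using g(2) by (rule order_trans[rotated])
  then have "subgraph_copy (blowup2_V V) (blowup2_E E) (X \<union> Y) H (blowup_map g)"
    by (rule blowup_copy_of_K22_embedding[OF _ g(3,4)])
  moreover have "fst P0 \<in> X" "snd P0 \<in> X" using P0 A(2) unfolding distinct_pairs_def by auto
  ultimately show ?thesis using g(1) by (intro exI[of _ "blowup_map g"]) (simp add: blowup_map_def)
qed

theorem mainTheorem8:
  fixes VT :: "'a set" and ET :: "'a set set" and v :: 'a
  assumes "is_tree VT ET" and "v \<in> VT"
  shows "\<exists>C::real. \<forall>(X::'b set) Y EH.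
     bipartite_graph X Y EH \<longrightarrow>
     (\<forall>y\<in>Y. real (degree EH y) \<ge> C * sqrt (real (card X))) \<longrightarrow>
     real (card (cherries X Y EH)) > C * real (card X) ^ 2 \<longrightarrow>
     (\<exists>f. subgraph_copy (blowup2_V VT) (blowup2_E ET) (X \<union> Y) EH f \<and>
          f (v, False) \<in> X \<and> f (v, True) \<in> X)"
proof -
  define K where "K = 4 * card VT + 1"
  have sg: "simple_graph VT ET" and ac: "acyclic_graph VT ET"
    using assms(1) unfolding is_tree_def by auto
  show ?thesis
  proof (intro exI[of _ "2 * real K + 2"] allI impI)
    fix X Y :: "'b set" and EH
    assume bip: "bipartite_graph X Y EH"
      and deg: "\<forall>y\<in>Y. (2 * real K + 2) * sqrt (real (card X)) \<le> real (degree EH y)"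
      and cher: "(2 * real K + 2) * real (card X) ^ 2 < real (card (cherries X Y EH))"
    have "K * (codegree_sum X Y EH + codegree_sum Y X EH) < K22_count X Y EH"
      using many_K22_in_dense_bipartite_graph[OF bip _ deg cher] by simp
    then show "\<exists>f. subgraph_copy (blowup2_V VT) (blowup2_E ET) (X \<union> Y) EH f \<and>
                 f (v, False) \<in> X \<and> f (v, True) \<in> X"
      using tree_blowup_copy_if_many_K22[OF sg ac assms(2)] bip
      unfolding K_def bipartite_graph_def by blast
  qed
qed

end
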